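(* Let $k\in\omega$. For every partition $\mathbb{C}_k=\bigcup_{i<2^k}X_i$ into $2^k$ pieces there is $i<2^k$ such that $\bigcup X_i=[0,1]^n$.
   Context: Fix a positive integer $n$ and real $0<r<n$. For each $k\in\omega$ fix $M_k\in\omega$ so large that $2^k(\sqrt{n}/M_k)^r<2^{-k}$. $C_k$ is the set of all cubes $[\frac{j_0}{M_k},\frac{j_0+1}{M_k}]\times\cdots\times[\frac{j_{n-1}}{M_k},\frac{j_{n-1}+1}{M_k}]$ with $j_i\in\{0,\dots,M_k-1\}$ for each $i<n$. $\mathbb{C}_k$ is the set of all subsets of $[0,1]^n$ that can be written as the union of $2^k$ (not necessarily distinct) elements of $C_k$. For $X\subset\mathbb{C}_k$, $\bigcup X$ denotes the union of the members of $X$. *)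

theory Defs
  imports "HOL-Analysis.Analysis"
begin

text \<open>The grid cubes C_k of side 1/M in [0,1]^n, where n = CARD('n).\<close>
definition grid_cubes :: "nat \<Rightarrow> (real^('n::finite)) set set" where
  "grid_cubes M = {cbox (\<chi> i. real (j i) / real M) (\<chi> i. (real (j i) + 1) / real M) | j.
                     \<forall>i. j i < M}"

text \<open>The family \<C>_k: unions of 2^k (not necessarily distinct) cubes from C_k.\<close>
definition cube_unions :: "nat \<Rightarrow> nat \<Rightarrow> (real^('n::finite)) set set" where
  "cube_unions k M = {\<Union> (c ` {..<(2::nat)^k}) | c. \<forall>i<(2::nat)^k. c i \<in> grid_cubes M}"

end

theory Submission
  imports Defs
begin

text \<open>A diagonal argument. If no \<open>\<Union>X\<^sub>i\<close> were all of \<open>[0,1]\<^sup>n\<close>, choose for every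
  \<open>i < 2\<^sup>k\<close> a grid cube containing a point missed by \<open>\<Union>X\<^sub>i\<close>. The union of these \<open>2\<^sup>k\<close> cubes
  is a member of \<open>\<C>\<^sub>k\<close>, hence lies in some \<open>X\<^sub>j\<close>, yet it contains a point missed by \<open>\<Union>X\<^sub>j\<close>.\<close>

lemma grid_cube_subset_unit_cube:
  assumes "g \<in> grid_cubes M"
  shows "g \<subseteq> cbox (0::real^'n::finite) 1"
proof
  obtain j where g: "g = cbox (\<chi> i. real (j i) / real M) (\<chi> i. (real (j i) + 1) / real M)"
    and j: "\<forall>i. j i < M"
    using assms unfolding grid_cubes_def by blast
  fix x assume "x \<in> g"
  then have x: "real (j i) / real M \<le> x$i" "x$i \<le> (real (j i) + 1) / real M" for i
    unfolding g mem_box_cart by auto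
  have bounds: "0 \<le> real (j i) / real M" "(real (j i) + 1) / real M \<le> 1" for i
    using j[rule_format, of i] by (simp_all add: divide_le_eq_1)
  have "0 \<le> x$i \<and> x$i \<le> 1" for i
    using bounds[of i] x[of i] by linarith
  then show "x \<in> cbox 0 1"
    unfolding mem_box_cart by simp
qed

lemma unit_cube_subset_Union_grid_cubes:
  assumes "M > 0"
  shows "cbox (0::real^'n::finite) 1 \<subseteq> \<Union> (grid_cubes M)"
proof
  fix x :: "real^'n" assume "x \<in> cbox 0 1"
  then have x01: "0 \<le> x$i" "x$i \<le> 1" for i
    unfolding mem_box_cart by auto
  \<comment> \<open>the cap at \<open>M - 1\<close> handles the face \<open>x$i = 1\<close>\<close>
  define j where "j i = min (M - 1) (nat \<lfloor>x$i * real M\<rfloor>)" for i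
  have j_less: "j i < M" for i
    unfolding j_def using assms by linarith
  have "real (j i) \<le> x$i * real M \<and> x$i * real M \<le> real (j i) + 1" for i
  proof (cases "nat \<lfloor>x$i * real M\<rfloor> \<le> M - 1")
    case True
    moreover have "\<lfloor>x$i * real M\<rfloor> \<ge> 0"
      using x01[of i] by simp
    ultimately have "real (j i) = of_int \<lfloor>x$i * real M\<rfloor>"
      unfolding j_def by simp
    then show ?thesis
      by linarith
  next
    case False
    then have "real (j i) = real M - 1"
      unfolding j_def using assms by auto
    moreover have "x$i * real M \<le> real M"
      using x01[of i] by (simp add: mult_left_le_one_le)
    ultimately show ?thesis
      using False by linarith
  qed
  then have "x \<in> cbox (\<chi> i. real (j i) / real M) (\<chi> i. (real (j i) + 1) / real M)"
    using assms unfolding mem_box_cart by (simp add: field_simps)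
  then show "x \<in> \<Union> (grid_cubes M)"
    using j_less unfolding grid_cubes_def by blast
qed

lemma cube_unions_subset_unit_cube:
  assumes "u \<in> cube_unions k M"
  shows "u \<subseteq> cbox (0::real^'n::finite) 1"
  using assms grid_cube_subset_unit_cube unfolding cube_unions_def by blast

lemma diagonal_piece_covers:
  fixes X :: "nat \<Rightarrow> 'a set set"
  assumes "S \<subseteq> \<Union> G"
    and "\<And>c. \<forall>i<N. c i \<in> G \<Longrightarrow> \<exists>j<N. \<Union> (c ` {..<N}) \<in> X j"
  shows "\<exists>i<N. S \<subseteq> \<Union> (X i)"
proof (rule ccontr)
  assume "\<not> ?thesis"
  then have "\<forall>i. \<exists>g. i < N \<longrightarrow> g \<in> G \<and> \<not> g \<subseteq> \<Union> (X i)"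
    using assms(1) by blast
  then obtain c where c: "\<And>i. i < N \<Longrightarrow> c i \<in> G \<and> \<not> c i \<subseteq> \<Union> (X i)"
    by metis
  then obtain j where j: "j < N" "\<Union> (c ` {..<N}) \<in> X j"
    using assms(2) by blast
  then have "c j \<subseteq> \<Union> (X j)"
    by blast
  with c[OF j(1)] show False
    by blast
qed

theorem lemma4p3:
  fixes r :: real and M :: "nat \<Rightarrow> nat" and k :: nat
    and X :: "nat \<Rightarrow> (real^('n::finite)) set set"
  assumes "0 < r" and "r < real CARD('n)"
    and "\<And>k. M k > 0"
    and "\<And>k. 2^k * (sqrt (real CARD('n)) / real (M k)) powr r < 1 / 2^k"
    and "(\<Union>i<2^k. X i) = cube_unions k (M k)"
    and "\<And>i j. i < 2^k \<Longrightarrow> j < 2^k \<Longrightarrow> i \<noteq> j \<Longrightarrow> X i \<inter> X j = {}"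
  shows "\<exists>i<2^k. \<Union> (X i) = cbox (0::real^'n) 1"
proof -
  have "\<exists>i<2^k. cbox 0 1 \<subseteq> \<Union> (X i)"
  proof (rule diagonal_piece_covers)
    show "cbox 0 1 \<subseteq> \<Union> (grid_cubes (M k))"
      using unit_cube_subset_Union_grid_cubes assms(3) .
    show "\<exists>j<2^k. \<Union> (c ` {..<2^k}) \<in> X j" 
      if "\<forall>i<2^k. c i \<in> grid_cubes (M k)" for c :: "nat \<Rightarrow> (real^'n) set"
    proof -
      have "\<Union> (c ` {..<2^k}) \<in> cube_unions k (M k)"
        using that unfolding cube_unions_def by blast
      then show ?thesis
        unfolding assms(5)[symmetric] by blast
    qed
  qed
  moreover have "\<Union> (X i) \<subseteq> cbox 0 1" if "i < 2^k" for i
    using that assms(5) cube_unions_subset_unit_cube by blast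
  ultimately show ?thesis
    by blast
qed

end
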